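(* Let $\mathcal{A}$ be a deterministic timed automaton (DTA) with reset-clocked language $\mathscr{L}_r(\mathcal{A})$. Then the relation $\sim_{\mathscr{L}_r(\mathcal{A})}$ on reset-clocked words has a finite number of equivalence classes.
   Context: Let $\Sigma$ be a finite alphabet and $\mathcal{C}=\{c_1,\dots,c_m\}$ a finite set of clocks. A clock constraint is a finite conjunction of atomic constraints $c\sim k$ ($c\in\mathcal{C}$, $k\in\mathbb{N}$, ${\sim}\in\{<,\le,=,\ge,>\}$). A timed automaton is $\mathcal{A}=(\Sigma,L,l_0,F,\mathcal{C},\Delta)$ with finite location set $L$, initial $l_0$, accepting $F\subseteq L$, transitions $\Delta\subseteq L\times\Sigma\times\Phi(\mathcal{C})\times2^{\mathcal{C}}\times L$. A run over a delay-timed word $(\sigma_1,t_1)\cdots(\sigma_n,t_n)\in(\Sigma\times\mathbb{R}_{\ge0})^*$ is $(l_0,\nu_0)\xrightarrow{t_1,\sigma_1}\cdots\xrightarrow{t_n,\sigma_n}(l_n,\nu_n)$ with $\nu_0\equiv0$ and transitions $(l_{i-1},\sigma_i,\phi_i,\mathcal{B}_i,l_i)\in\Delta$ with $\nu_{i-1}+t_i$ satisfying $\phi_i$ and $\nu_i$ obtained from $\nu_{i-1}+t_i$ by setting the clocks in $\mathcal{B}_i$ to $0$; accepting if $l_n\in F$. $\mathcal{A}$ is a DTA if every delay-timed word has at most one run. The reset-clocked word of the run is $(\sigma_1,\mathbf{v}_1,\mathbf{b}_1)\cdots(\sigma_n,\mathbf{v}_n,\mathbf{b}_n)$ with $\mathbf{v}_i=\nu_{i-1}+t_i\in\mathbb{R}_{\ge0}^m$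 and $\mathbf{b}_{i,j}=\top$ iff $c_j\in\mathcal{B}_i$ (else $\bot$). $\mathscr{L}_r(\mathcal{A})$ is the set of reset-clocked words of accepting runs. A reset-clocked word (any element of $(\Sigma\times\mathbb{R}_{\ge0}^m\times\{\top,\bot\}^m)^*$) is valid for $\mathcal{A}$ if it is the reset-clocked word of some run. $resets(\cdot)$ returns $\mathbf{b}_1,\dots,\mathbf{b}_n$; $vw(\cdot)$ drops resets. Regions: with $\kappa(c)$ the largest integer in guards of $\mathcal{A}$ over $c$, valuations $\nu,\nu'$ are region-equivalent iff (i) for all $c$, $\lfloor\nu(c)\rfloor=\lfloor\nu'(c)\rfloor$ or both exceed $\kappa(c)$; (ii) for $c$ with $\nu(c)\le\kappa(c)$, $\mathrm{frac}(\nu(c))=0$ iff $\mathrm{frac}(\nu'(c))=0$; (iii) for $c_i,c_j$ with $\nu(c_i)\le\kappa(c_i),\nu(c_j)\le\kappa(c_j)$, $\mathrm{frac}(\nu(c_i))\le\mathrm{frac}(\nu(c_j))$ iff $\mathrm{frac}(\nu'(c_i))\le\mathrm{frac}(\nu'(c_j))$; a region is an equivalence class $\llbracket\nu\rrbracket$. A region word is a finite sequence of pairs $(\sigma,R)$ with $\sigma\in\Sigma$ and $R$ a region; a clocked word $(\sigma_1,\mathbf{v}_1)\cdots(\sigma_n,\mathbf{v}_n)$ maps to $(\sigma_1,\llbracket\mathbf{v}_1\rrbracket)\cdots(\sigma_n,\llbracket\mathbf{v}_n\rrbracket)$. $\mathit{vs}_{\mathcal{A}}(\gamma_r,\xi)$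 is the set of reset-clocked words $\gamma_r'$ with $\llbracket vw(\gamma_r')\rrbracket=\xi$ and $\gamma_r\gamma_r'$ valid for $\mathcal{A}$. Two reset-clocked words satisfy $\gamma_{r1}\sim_{\mathscr{L}_r(\mathcal{A})}\gamma_{r2}$ iff for every region word $\xi$ and all $\gamma_{r1}'\in\mathit{vs}_{\mathcal{A}}(\gamma_{r1},\xi)$, $\gamma_{r2}'\in\mathit{vs}_{\mathcal{A}}(\gamma_{r2},\xi)$: $\gamma_{r1}\gamma_{r1}'\in\mathscr{L}_r(\mathcal{A})$ iff $\gamma_{r2}\gamma_{r2}'\in\mathscr{L}_r(\mathcal{A})$, and $resets(\gamma_{r1}')=resets(\gamma_{r2}')$. *)

theory Defs
  imports Complex_Main
begin

text \<open>Alphabet: a finite type 's; clocks: a finite type 'c (so valuations 'c => real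
  play the role of vectors in R^m, and reset vectors 'c => bool of {T,F}^m).\<close>

datatype cmp = Lt | Le | Eq | Ge | Gt

type_synonym 'c atom = "'c \<times> cmp \<times> nat"
type_synonym 'c constr = "'c atom list"

fun cmp_sat :: "cmp \<Rightarrow> real \<Rightarrow> real \<Rightarrow> bool" where
  "cmp_sat Lt x k = (x < k)"
| "cmp_sat Le x k = (x \<le> k)"
| "cmp_sat Eq x k = (x = k)"
| "cmp_sat Ge x k = (x \<ge> k)"
| "cmp_sat Gt x k = (x > k)"

definition sat :: "('c \<Rightarrow> real) \<Rightarrow> 'c constr \<Rightarrow> bool" where
  "sat v \<phi> = (\<forall>(c, r, k) \<in> set \<phi>. cmp_sat r (v c) (real k))"

type_synonym ('s, 'c, 'l) transition = "'l \<times> 's \<times> 'c constr \<times> 'c set \<times> 'l"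

record ('s, 'c, 'l) ta =
  locs :: "'l set"
  init :: 'l
  acc :: "'l set"
  trans :: "('s, 'c, 'l) transition set"

definition wf_ta :: "('s::finite, 'c::finite, 'l) ta \<Rightarrow> bool" where
  "wf_ta A \<longleftrightarrow> finite (locs A) \<and> init A \<in> locs A \<and> acc A \<subseteq> locs A
     \<and> finite (trans A)
     \<and> (\<forall>(l, \<sigma>, \<phi>, B, l') \<in> trans A. l \<in> locs A \<and> l' \<in> locs A)"

type_synonym ('s, 'c) rcword = "('s \<times> ('c \<Rightarrow> real) \<times> ('c \<Rightarrow> bool)) list"

inductive runp :: "('s, 'c, 'l) ta \<Rightarrow> 'l \<Rightarrow> ('c \<Rightarrow> real) \<Rightarrow> ('s \<times> real) list
    \<Rightarrow> ('s, 'c, 'l) transition list \<Rightarrow> ('s, 'c) rcword \<Rightarrow> 'l \<Rightarrow> bool"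
  for A where
  run_nil: "runp A l \<nu> [] [] [] l"
| run_step: "\<lbrakk> (l, \<sigma>, \<phi>, B, l'') \<in> trans A; t \<ge> 0; v = (\<lambda>c. \<nu> c + t); sat v \<phi>;
     runp A l'' (\<lambda>c. if c \<in> B then 0 else v c) w ts \<gamma> l' \<rbrakk>
   \<Longrightarrow> runp A l \<nu> ((\<sigma>, t) # w) ((l, \<sigma>, \<phi>, B, l'') # ts) ((\<sigma>, v, \<lambda>c. c \<in> B) # \<gamma>) l'"

definition is_DTA :: "('s::finite, 'c::finite, 'l) ta \<Rightarrow> bool" where
  "is_DTA A \<longleftrightarrow> wf_ta A \<and>
     (\<forall>w ts1 ts2 \<gamma>1 \<gamma>2 l1 l2.
        runp A (init A) (\<lambda>_. 0) w ts1 \<gamma>1 l1 \<longrightarrow> runp A (init A) (\<lambda>_. 0) w ts2 \<gamma>2 l2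
        \<longrightarrow> ts1 = ts2 \<and> \<gamma>1 = \<gamma>2 \<and> l1 = l2)"

definition valid_rc :: "('s, 'c, 'l) ta \<Rightarrow> ('s, 'c) rcword \<Rightarrow> bool" where
  "valid_rc A \<gamma> \<longleftrightarrow> (\<exists>w ts l'. runp A (init A) (\<lambda>_. 0) w ts \<gamma> l')"

definition Lr :: "('s, 'c, 'l) ta \<Rightarrow> ('s, 'c) rcword set" where
  "Lr A = {\<gamma>. \<exists>w ts l'. runp A (init A) (\<lambda>_. 0) w ts \<gamma> l' \<and> l' \<in> acc A}"

definition resets :: "('s, 'c) rcword \<Rightarrow> ('c \<Rightarrow> bool) list" where
  "resets \<gamma> = map (\<lambda>(\<sigma>, v, b). b) \<gamma>"

definition vw :: "('s, 'c) rcword \<Rightarrow> ('s \<times> ('c \<Rightarrow> real)) list" where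
  "vw \<gamma> = map (\<lambda>(\<sigma>, v, b). (\<sigma>, v)) \<gamma>"

definition kappa :: "('s, 'c, 'l) ta \<Rightarrow> 'c \<Rightarrow> real" where
  "kappa A c = real (Max ({0} \<union> {k. \<exists>l \<sigma> \<phi> B l' r. (l, \<sigma>, \<phi>, B, l') \<in> trans A
                                  \<and> (c, r, k) \<in> set \<phi>}))"

definition region_cond :: "('s, 'c, 'l) ta \<Rightarrow> ('c \<Rightarrow> real) \<Rightarrow> ('c \<Rightarrow> real) \<Rightarrow> bool" where
  "region_cond A \<nu> \<nu>' \<longleftrightarrow>
     (\<forall>c. \<lfloor>\<nu> c\<rfloor> = \<lfloor>\<nu>' c\<rfloor> \<or> (\<nu> c > kappa A c \<and> \<nu>' c > kappa A c)) \<and>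
     (\<forall>c. \<nu> c \<le> kappa A c \<longrightarrow> (frac (\<nu> c) = 0 \<longleftrightarrow> frac (\<nu>' c) = 0)) \<and>
     (\<forall>ci cj. \<nu> ci \<le> kappa A ci \<and> \<nu> cj \<le> kappa A cj \<longrightarrow>
        (frac (\<nu> ci) \<le> frac (\<nu> cj) \<longleftrightarrow> frac (\<nu>' ci) \<le> frac (\<nu>' cj)))"

definition region_equiv :: "('s, 'c, 'l) ta \<Rightarrow> ('c \<Rightarrow> real) \<Rightarrow> ('c \<Rightarrow> real) \<Rightarrow> bool" where
  "region_equiv A \<nu> \<nu>' \<longleftrightarrow> region_cond A \<nu> \<nu>' \<and> region_cond A \<nu>' \<nu>"

definition region_of :: "('s, 'c, 'l) ta \<Rightarrow> ('c \<Rightarrow> real) \<Rightarrow> ('c \<Rightarrow> real) set" where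
  "region_of A \<nu> = {\<nu>'. region_equiv A \<nu> \<nu>'}"

type_synonym ('s, 'c) region_word = "('s \<times> ('c \<Rightarrow> real) set) list"

definition region_word_of :: "('s, 'c, 'l) ta \<Rightarrow> ('s \<times> ('c \<Rightarrow> real)) list \<Rightarrow> ('s, 'c) region_word" where
  "region_word_of A cw = map (\<lambda>(\<sigma>, v). (\<sigma>, region_of A v)) cw"

definition vs :: "('s, 'c, 'l) ta \<Rightarrow> ('s, 'c) rcword \<Rightarrow> ('s, 'c) region_word \<Rightarrow> ('s, 'c) rcword set" where
  "vs A \<gamma> \<xi> = {\<gamma>'. region_word_of A (vw \<gamma>') = \<xi> \<and> valid_rc A (\<gamma> @ \<gamma>')}"

definition rc_equiv :: "('s, 'c, 'l) ta \<Rightarrow> ('s, 'c) rcword \<Rightarrow> ('s, 'c) rcword \<Rightarrow> bool" where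
  "rc_equiv A \<gamma>1 \<gamma>2 \<longleftrightarrow>
     (\<forall>\<xi>. \<forall>\<gamma>1' \<in> vs A \<gamma>1 \<xi>. \<forall>\<gamma>2' \<in> vs A \<gamma>2 \<xi>.
        (\<gamma>1 @ \<gamma>1' \<in> Lr A \<longleftrightarrow> \<gamma>2 @ \<gamma>2' \<in> Lr A) \<and> resets \<gamma>1' = resets \<gamma>2')"

end

theory Submission
  imports Defs "HOL-Library.FuncSet"
begin

text \<open>A valid reset-clocked word \<open>\<gamma>\<close> leads the DTA to a unique location \<open>l\<close> with a final clock
  valuation \<open>\<nu>\<close>. From region-equivalent valuations every run can be mirrored along the same
  transitions with the same region word (time elapse is transported by an increasing map of the
  reals commuting with integer translations). Conversely, by determinism the transition taken
  after \<open>\<gamma>\<close> is fixed by the region of the valuation at which it is taken, so two continuations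
  from \<open>l\<close> with the same region word have the same resets and end location. Hence the class of
  \<open>\<gamma>\<close> depends only on \<open>l\<close> and the region of \<open>\<nu>\<close> (invalid words have no continuations and are
  related to every word), and there are finitely many such pairs.\<close>

section \<open>Runs\<close>

fun final_val :: "('c \<Rightarrow> real) \<Rightarrow> ('s, 'c) rcword \<Rightarrow> 'c \<Rightarrow> real" where
  "final_val \<nu> [] = \<nu>"
| "final_val \<nu> ((\<sigma>, v, b) # \<gamma>) = final_val (\<lambda>c. if b c then 0 else v c) \<gamma>"

lemma final_val_append: "final_val \<nu> (\<gamma> @ \<gamma>') = final_val (final_val \<nu> \<gamma>) \<gamma>'"
  by (induction \<nu> \<gamma> rule: final_val.induct) auto

inductive_cases runp_NilE[consumes 1]: "runp A l \<nu> w ts [] l'"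
inductive_cases runp_ConsE[consumes 1, case_names step]: "runp A l \<nu> w ts (x # \<gamma>) l'"

lemma runp_single:
  assumes "(l, \<sigma>, \<phi>, B, l') \<in> trans A" "t \<ge> 0" "sat (\<lambda>c. \<nu> c + t) \<phi>"
  shows "runp A l \<nu> [(\<sigma>, t)] [(l, \<sigma>, \<phi>, B, l')] [(\<sigma>, \<lambda>c. \<nu> c + t, \<lambda>c. c \<in> B)] l'"
  by (rule runp.run_step[OF assms(1,2) refl assms(3) runp.run_nil])

lemma runp_append:
  assumes "runp A l \<nu> w ts \<gamma> l'" "runp A l' (final_val \<nu> \<gamma>) w' ts' \<gamma>' l''"
  shows "runp A l \<nu> (w @ w') (ts @ ts') (\<gamma> @ \<gamma>') l''"
  using assms by (induction rule: runp.induct) (auto intro: runp.run_step)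

lemma runp_appendE:
  assumes "runp A l \<nu> w ts (\<gamma> @ \<gamma>') l''"
  obtains w1 w2 ts1 ts2 l' where "w = w1 @ w2" "ts = ts1 @ ts2"
    "runp A l \<nu> w1 ts1 \<gamma> l'" "runp A l' (final_val \<nu> \<gamma>) w2 ts2 \<gamma>' l''"
  using assms
proof (induction \<gamma> arbitrary: l \<nu> w ts)
  case Nil
  then show ?case by (metis append_Nil final_val.simps(1) runp.run_nil)
next
  case (Cons x \<gamma>)
  from Cons.prems(2) have "runp A l \<nu> w ts (x # \<gamma> @ \<gamma>') l''" by simp
  then show ?case
  proof (cases rule: runp_ConsE)
    case (step \<sigma> \<phi> B l1 t w0 ts0)
    show ?thesis
    proof (rule Cons.IH[OF _ step(7)])
      fix w1 w2 ts1 ts2 l'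
      assume "w0 = w1 @ w2" "ts0 = ts1 @ ts2"
        "runp A l1 (\<lambda>c. if c \<in> B then 0 else \<nu> c + t) w1 ts1 \<gamma> l'"
        "runp A l' (final_val (\<lambda>c. if c \<in> B then 0 else \<nu> c + t) \<gamma>) w2 ts2 \<gamma>' l''"
      with step show ?thesis
        by (intro Cons.prems(1)[of "(\<sigma>, t) # w1" w2 "(l, \<sigma>, \<phi>, B, l1) # ts1" ts2 l'])
          (auto intro: runp.run_step)
    qed
  qed
qed

lemma runp_rcword_determines_delays:
  assumes "runp A l \<nu> w ts \<gamma> l'" "runp A l2 \<nu> w2 ts2 \<gamma> l2'"
  shows "w = w2"
  using assms
proof (induction arbitrary: l2 w2 ts2 l2' rule: runp.induct)
  case (run_nil l \<nu>)
  then show ?case by (auto elim: runp_NilE)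
next
  case (run_step l \<sigma> \<phi> B l'' t v \<nu> w ts \<gamma> l')
  from run_step.prems show ?case
  proof (cases rule: runp_ConsE)
    case (step \<sigma>2 \<phi>2 B2 l2'' t2 w0 ts0)
    have "\<nu> c + t = \<nu> c + t2" for c
      using step(3) run_step.hyps(3) by (metis prod.inject)
    then have "t = t2" by simp
    moreover have "B = B2"
      using step(3) by (metis Collect_mem_eq prod.inject)
    ultimately show ?thesis
      using step run_step.IH run_step.hyps(3) by auto
  qed
qed

definition reaches :: "('s, 'c, 'l) ta \<Rightarrow> ('s, 'c) rcword \<Rightarrow> 'l \<Rightarrow> bool" where
  "reaches A \<gamma> l \<longleftrightarrow> (\<exists>w ts. runp A (init A) (\<lambda>_. 0) w ts \<gamma> l)"

lemma valid_rc_iff_reaches: "valid_rc A \<gamma> \<longleftrightarrow> (\<exists>l. reaches A \<gamma> l)"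
  unfolding valid_rc_def reaches_def by blast

lemma Lr_iff_reaches: "\<gamma> \<in> Lr A \<longleftrightarrow> (\<exists>l \<in> acc A. reaches A \<gamma> l)"
  unfolding Lr_def reaches_def by blast

lemma reaches_append_iff:
  "reaches A (\<gamma> @ \<gamma>') l' \<longleftrightarrow>
     (\<exists>l w ts. reaches A \<gamma> l \<and> runp A l (final_val (\<lambda>_. 0) \<gamma>) w ts \<gamma>' l')"
  unfolding reaches_def by (blast elim: runp_appendE intro: runp_append)

lemma dta_reaches_unique:
  assumes "is_DTA A" "reaches A \<gamma> l1" "reaches A \<gamma> l2"
  shows "l1 = l2"
  using assms runp_rcword_determines_delays unfolding is_DTA_def reaches_def by metis

lemma dta_enabled_transition_unique:
  assumes "is_DTA A" "reaches A \<gamma> l" "t \<ge> 0"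
    and "(l, \<sigma>, \<phi>1, B1, l1) \<in> trans A" "sat (\<lambda>c. final_val (\<lambda>_. 0) \<gamma> c + t) \<phi>1"
    and "(l, \<sigma>, \<phi>2, B2, l2) \<in> trans A" "sat (\<lambda>c. final_val (\<lambda>_. 0) \<gamma> c + t) \<phi>2"
  shows "B1 = B2 \<and> l1 = l2"
proof -
  obtain w ts where run: "runp A (init A) (\<lambda>_. 0) w ts \<gamma> l"
    using assms(2) unfolding reaches_def by blast
  note step1 = runp_append[OF run runp_single[OF assms(4,3,5)]]
  note step2 = runp_append[OF run runp_single[OF assms(6,3,7)]]
  show ?thesis
    using assms(1) step1 step2 unfolding is_DTA_def by blast
qed

lemma vs_eq_continuations:
  assumes "is_DTA A" "reaches A \<gamma> l"
  shows "vs A \<gamma> \<xi> = {\<gamma>'. region_word_of A (vw \<gamma>') = \<xi> \<and>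
                        (\<exists>w ts l'. runp A l (final_val (\<lambda>_. 0) \<gamma>) w ts \<gamma>' l')}"
  using assms dta_reaches_unique[OF assms(1,2)]
  unfolding vs_def valid_rc_iff_reaches reaches_append_iff by blast

lemma append_in_Lr_iff:
  assumes "is_DTA A" "reaches A \<gamma> l" "runp A l (final_val (\<lambda>_. 0) \<gamma>) w ts \<gamma>' l'"
  shows "\<gamma> @ \<gamma>' \<in> Lr A \<longleftrightarrow> l' \<in> acc A"
proof -
  have "reaches A (\<gamma> @ \<gamma>') l'"
    using assms(2,3) unfolding reaches_append_iff by blast
  then show ?thesis
    using assms(1) dta_reaches_unique Lr_iff_reaches by metis
qed

lemma vs_empty_if_not_valid: "\<not> valid_rc A \<gamma> \<Longrightarrow> vs A \<gamma> \<xi> = {}"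
  unfolding vs_def valid_rc_iff_reaches reaches_append_iff by blast

section \<open>Region equivalence\<close>

lemma frac_le_0_iff: "frac x \<le> 0 \<longleftrightarrow> frac x = 0"
  using frac_ge_0[of x] by linarith

lemma kappa_eq_nat: "\<exists>n::nat. kappa A c = real n"
  unfolding kappa_def by blast

lemma kappa_nonneg: "0 \<le> kappa A c"
  unfolding kappa_def by simp

lemma guard_constant_le_kappa:
  assumes "finite (trans A)" "(l, \<sigma>, \<phi>, B, l') \<in> trans A" "(c, r, k) \<in> set \<phi>"
  shows "real k \<le> kappa A c"
proof -
  let ?K = "{k. \<exists>l \<sigma> \<phi> B l' r. (l, \<sigma>, \<phi>, B, l') \<in> trans A \<and> (c, r, k) \<in> set \<phi>}"
  have "?K \<subseteq> (\<lambda>x. snd (snd x)) ` (\<Union>\<tau> \<in> trans A. set (fst (snd (snd \<tau>))))"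
    by force
  moreover have "finite ((\<lambda>x. snd (snd x)) ` (\<Union>\<tau> \<in> trans A. set (fst (snd (snd \<tau>)))))"
    using assms(1) by auto
  ultimately have "finite ?K"
    by (rule finite_subset)
  moreover have "k \<in> ?K"
    using assms(2,3) by blast
  ultimately show ?thesis
    unfolding kappa_def by simp
qed

definition same_region :: "('s, 'c, 'l) ta \<Rightarrow> ('c \<Rightarrow> real) \<Rightarrow> ('c \<Rightarrow> real) \<Rightarrow> bool" where
  "same_region A \<nu> \<nu>' \<longleftrightarrow>
     (\<forall>c. (\<nu> c \<le> kappa A c \<longleftrightarrow> \<nu>' c \<le> kappa A c) \<and>
          (\<nu> c \<le> kappa A c \<longrightarrow> \<lfloor>\<nu> c\<rfloor> = \<lfloor>\<nu>' c\<rfloor> \<and> (frac (\<nu> c) = 0 \<longleftrightarrow> frac (\<nu>' c) = 0))) \<and>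
     (\<forall>c d. \<nu> c \<le> kappa A c \<longrightarrow> \<nu> d \<le> kappa A d \<longrightarrow>
          (frac (\<nu> c) \<le> frac (\<nu> d) \<longleftrightarrow> frac (\<nu>' c) \<le> frac (\<nu>' d)))"

definition region_sig ::
    "('s, 'c, 'l) ta \<Rightarrow> ('c \<Rightarrow> real) \<Rightarrow> ('c \<Rightarrow> int option) \<times> ('c \<Rightarrow> bool) \<times> ('c \<Rightarrow> 'c \<Rightarrow> bool)" where
  "region_sig A \<nu> =
     ((\<lambda>c. if \<nu> c \<le> kappa A c then Some \<lfloor>\<nu> c\<rfloor> else None),
      (\<lambda>c. \<nu> c \<le> kappa A c \<and> frac (\<nu> c) = 0),
      (\<lambda>c d. \<nu> c \<le> kappa A c \<and> \<nu> d \<le> kappa A d \<and> frac (\<nu> c) \<le> frac (\<nu> d)))"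

lemma same_region_iff_region_sig_eq: "same_region A \<nu> \<nu>' \<longleftrightarrow> region_sig A \<nu> = region_sig A \<nu>'"
proof
  assume "same_region A \<nu> \<nu>'"
  then show "region_sig A \<nu> = region_sig A \<nu>'"
    unfolding same_region_def region_sig_def by (simp add: fun_eq_iff) blast
next
  assume sig: "region_sig A \<nu> = region_sig A \<nu>'"
  have "(if \<nu> c \<le> kappa A c then Some \<lfloor>\<nu> c\<rfloor> else None) =
        (if \<nu>' c \<le> kappa A c then Some \<lfloor>\<nu>' c\<rfloor> else None)" for c
    using sig unfolding region_sig_def by (simp add: fun_eq_iff)
  then have bounded: "\<nu> c \<le> kappa A c \<longleftrightarrow> \<nu>' c \<le> kappa A c"
    and floor: "\<nu> c \<le> kappa A c \<Longrightarrow> \<lfloor>\<nu> c\<rfloor> = \<lfloor>\<nu>' c\<rfloor>" for c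
    by (metis option.distinct(1) option.inject)+
  with sig show "same_region A \<nu> \<nu>'"
    unfolding same_region_def region_sig_def by (simp add: fun_eq_iff) blast
qed

text \<open>Clause (i) of \<open>region_cond\<close> alone allows \<open>\<nu> c \<le> kappa A c < \<nu>' c\<close> with equal floors; the
  integrality clause (ii) excludes this because \<open>kappa A c\<close> is an integer.\<close>

lemma region_cond_bounded:
  assumes "region_cond A \<nu> \<nu>'" "region_cond A \<nu>' \<nu>" "\<nu> c \<le> kappa A c"
  shows "\<nu>' c \<le> kappa A c \<and> \<lfloor>\<nu> c\<rfloor> = \<lfloor>\<nu>' c\<rfloor>"
proof -
  have floor: "\<lfloor>\<nu> c\<rfloor> = \<lfloor>\<nu>' c\<rfloor>"
    using assms unfolding region_cond_def by force
  obtain n :: nat where n: "kappa A c = real n"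
    using kappa_eq_nat[of A c] by blast
  have "\<nu>' c \<le> real n"
  proof (rule ccontr)
    assume above: "\<not> \<nu>' c \<le> real n"
    have "\<lfloor>\<nu> c\<rfloor> \<le> int n" "int n \<le> \<lfloor>\<nu>' c\<rfloor>"
      using assms(3) above n by (simp_all add: floor_le_iff le_floor_iff)
    then have "\<lfloor>\<nu> c\<rfloor> = int n"
      using floor by simp
    then have "\<nu> c = real n"
      using assms(3) n by (metis floor_eq_iff of_int_of_nat_eq order_antisym)
    then have "frac (\<nu> c) = 0"
      by simp
    then have "frac (\<nu>' c) = 0"
      using assms(1,3) unfolding region_cond_def by blast
    then have "\<nu>' c = real n"
      using floor \<open>\<lfloor>\<nu> c\<rfloor> = int n\<close> unfolding frac_def by simp
    with above show False
      by simp
  qed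
  with floor n show ?thesis
    by simp
qed

lemma region_equiv_iff_same_region: "region_equiv A \<nu> \<nu>' \<longleftrightarrow> same_region A \<nu> \<nu>'"
proof
  assume "region_equiv A \<nu> \<nu>'"
  then have conds: "region_cond A \<nu> \<nu>'" "region_cond A \<nu>' \<nu>"
    unfolding region_equiv_def by auto
  have "\<nu> c \<le> kappa A c \<longleftrightarrow> \<nu>' c \<le> kappa A c" for c
    using region_cond_bounded[OF conds] region_cond_bounded[OF conds(2,1)] by blast
  with conds(1) region_cond_bounded[OF conds] show "same_region A \<nu> \<nu>'"
    unfolding same_region_def region_cond_def by blast
next
  assume "same_region A \<nu> \<nu>'"
  then have "region_cond A \<nu> \<nu>'" "region_cond A \<nu>' \<nu>"
    unfolding same_region_def region_cond_def by (metis not_le)+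
  then show "region_equiv A \<nu> \<nu>'"
    unfolding region_equiv_def by simp
qed

lemma region_of_eq_iff: "region_of A \<nu> = region_of A \<nu>' \<longleftrightarrow> same_region A \<nu> \<nu>'"
  unfolding region_of_def region_equiv_iff_same_region same_region_iff_region_sig_eq
  by (auto simp: set_eq_iff)

lemma finite_image_factor:
  assumes "finite (f ` S)" "\<And>x y. x \<in> S \<Longrightarrow> y \<in> S \<Longrightarrow> f x = f y \<Longrightarrow> g x = g y"
  shows "finite (g ` S)"
proof -
  have "g (inv_into S f (f x)) = g x" if "x \<in> S" for x
  proof (rule assms(2))
    show "inv_into S f (f x) \<in> S" "f (inv_into S f (f x)) = f x"
      using that by (simp_all add: inv_into_into f_inv_into_f)
  qed (rule that)
  then have "g ` S = (\<lambda>a. g (inv_into S f a)) ` f ` S"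
    by (simp add: image_image cong: image_cong)
  then show ?thesis
    using assms(1) by simp
qed

lemma finite_region_sigs:
  fixes A :: "('s, 'c::finite, 'l) ta"
  shows "finite (region_sig A ` {\<nu>. \<forall>c. 0 \<le> \<nu> c})"
proof -
  define K where "K = \<lfloor>Max (range (kappa A))\<rfloor>"
  have "(\<lambda>c. if \<nu> c \<le> kappa A c then Some \<lfloor>\<nu> c\<rfloor> else None) \<in> UNIV \<rightarrow>\<^sub>E insert None (Some ` {0..K})"
    if "\<forall>c. 0 \<le> \<nu> c" for \<nu>
  proof -
    have "\<lfloor>\<nu> c\<rfloor> \<le> K" if "\<nu> c \<le> kappa A c" for c
    proof -
      have "kappa A c \<le> Max (range (kappa A))"
        by (rule Max_ge) auto
      with that show ?thesis
        unfolding K_def by (meson floor_mono order.trans)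
    qed
    with \<open>\<forall>c. 0 \<le> \<nu> c\<close> show ?thesis
      by auto
  qed
  then have "region_sig A ` {\<nu>. \<forall>c. 0 \<le> \<nu> c} \<subseteq> (UNIV \<rightarrow>\<^sub>E insert None (Some ` {0..K})) \<times> UNIV"
    unfolding region_sig_def by auto
  then show ?thesis
    by (rule finite_subset) (simp add: finite_PiE)
qed

lemma finite_nonneg_regions:
  fixes A :: "('s, 'c::finite, 'l) ta"
  shows "finite (region_of A ` {\<nu>. \<forall>c. 0 \<le> \<nu> c})"
  using finite_region_sigs
  by (rule finite_image_factor) (simp add: region_of_eq_iff same_region_iff_region_sig_eq)

lemma cmp_sat_floor_frac_cong:
  assumes "\<lfloor>x\<rfloor> = \<lfloor>y\<rfloor>" "frac x = 0 \<longleftrightarrow> frac y = 0"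
  shows "cmp_sat r x (real k) \<longleftrightarrow> cmp_sat r y (real k)"
proof -
  have less: "z < real k \<longleftrightarrow> \<lfloor>z\<rfloor> < int k" for z :: real
    by (simp add: floor_less_iff)
  have eq: "z = real k \<longleftrightarrow> \<lfloor>z\<rfloor> = int k \<and> frac z = 0" for z :: real
    unfolding frac_def by (metis floor_of_nat of_int_of_nat_eq eq_iff_diff_eq_0)
  show ?thesis
    using less[of x] less[of y] eq[of x] eq[of y] assms by (cases r) auto
qed

lemma sat_same_region:
  assumes "finite (trans A)" "(l, \<sigma>, \<phi>, B, l') \<in> trans A"
    and "same_region A v v'" "sat v \<phi>"
  shows "sat v' \<phi>"
  unfolding sat_def
proof (intro ballI, clarify)
  fix c r k
  assume atom: "(c, r, k) \<in> set \<phi>"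
  have k: "real k \<le> kappa A c"
    using guard_constant_le_kappa[OF assms(1,2) atom] .
  have v: "cmp_sat r (v c) (real k)"
    using assms(4) atom unfolding sat_def by auto
  show "cmp_sat r (v' c) (real k)"
  proof (cases "v c \<le> kappa A c")
    case True
    then have "\<lfloor>v c\<rfloor> = \<lfloor>v' c\<rfloor>" "frac (v c) = 0 \<longleftrightarrow> frac (v' c) = 0"
      using assms(3) unfolding same_region_def by auto
    with v show ?thesis
      using cmp_sat_floor_frac_cong by blast
  next
    case False
    then have "v' c > kappa A c"
      using assms(3) unfolding same_region_def by auto
    with False v k show ?thesis
      by (cases r) auto
  qed
qed

lemma same_region_reset:
  assumes "same_region A v v'"
  shows "same_region A (\<lambda>c. if c \<in> B then 0 else v c) (\<lambda>c. if c \<in> B then 0 else v' c)"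
  unfolding same_region_def
proof (intro conjI allI impI)
  fix c
  show "(if c \<in> B then 0 else v c) \<le> kappa A c \<longleftrightarrow> (if c \<in> B then 0 else v' c) \<le> kappa A c"
    using assms kappa_nonneg[of A c] unfolding same_region_def by auto
next
  fix c
  assume "(if c \<in> B then 0 else v c) \<le> kappa A c"
  then show "\<lfloor>if c \<in> B then 0 else v c\<rfloor> = \<lfloor>if c \<in> B then 0 else v' c\<rfloor>"
    and "frac (if c \<in> B then 0 else v c) = 0 \<longleftrightarrow> frac (if c \<in> B then 0 else v' c) = 0"
    using assms unfolding same_region_def by auto
next
  fix c d
  assume "(if c \<in> B then 0 else v c) \<le> kappa A c" "(if d \<in> B then 0 else v d) \<le> kappa A d"
  then show "frac (if c \<in> B then 0 else v c) \<le> frac (if d \<in> B then 0 else v d) \<longleftrightarrow>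
             frac (if c \<in> B then 0 else v' c) \<le> frac (if d \<in> B then 0 else v' d)"
    using assms unfolding same_region_def
    by (cases "c \<in> B"; cases "d \<in> B") (simp_all add: frac_le_0_iff)
qed

section \<open>Time elapse preserves region equivalence\<close>

lemma order_preserving_pairs_slope:
  fixes P :: "(real \<times> real) set"
  assumes "finite P"
    and order: "\<And>x y x' y'. (x, y) \<in> P \<Longrightarrow> (x', y') \<in> P \<Longrightarrow> x \<le> x' \<longleftrightarrow> y \<le> y'"
  obtains s where "s > 0"
    "\<And>x y x' y'. (x, y) \<in> P \<Longrightarrow> (x', y') \<in> P \<Longrightarrow> x \<le> x' \<Longrightarrow> s * (x' - x) \<le> y' - y"
proof
  define R where "R = (\<lambda>((x, y), (x', y')). (y' - y) / (x' - x)) ` {(p, q) \<in> P \<times> P. fst p < fst q}"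
  have "finite R"
    unfolding R_def using assms(1) by (auto intro: finite_subset[of _ "P \<times> P"])
  have R_pos: "r > 0" if "r \<in> R" for r
  proof -
    obtain x y x' y' where "(x, y) \<in> P" "(x', y') \<in> P" "x < x'" "r = (y' - y) / (x' - x)"
      using \<open>r \<in> R\<close> unfolding R_def by auto
    moreover have "y < y'"
      using order[OF calculation(2,1)] calculation(3) by linarith
    ultimately show "r > 0"
      by simp
  qed
  show "Min (insert 1 R) > 0"
    using \<open>finite R\<close> R_pos by (subst Min_gr_iff) auto
  fix x y x' y'
  assume xy: "(x, y) \<in> P" "(x', y') \<in> P" "x \<le> x'"
  show "Min (insert 1 R) * (x' - x) \<le> y' - y"
  proof (cases "x = x'")
    case True
    then show ?thesis
      using order[OF xy(1,2)] order[OF xy(2,1)] by auto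
  next
    case False
    with xy have "x < x'" "(y' - y) / (x' - x) \<in> R"
      unfolding R_def by (auto intro!: image_eqI[of _ _ "((x, y), (x', y'))"])
    moreover have "Min (insert 1 R) \<le> (y' - y) / (x' - x)"
      using \<open>finite R\<close> calculation(2) by (intro Min_le) auto
    ultimately show ?thesis
      by (simp add: pos_le_divide_eq)
  qed
qed

text \<open>The interpolant is \<open>z \<mapsto> s * z + M z\<close>, where \<open>s > 0\<close> is below every slope between
  pairs and \<open>M z\<close> is the largest offset \<open>y - s * x\<close> of a pair with \<open>x \<le> z\<close>.\<close>

lemma strict_mono_interpolant:
  fixes P :: "(real \<times> real) set"
  assumes "finite P"
    and "\<And>x y x' y'. (x, y) \<in> P \<Longrightarrow> (x', y') \<in> P \<Longrightarrow> x \<le> x' \<longleftrightarrow> y \<le> y'"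
  obtains \<psi> :: "real \<Rightarrow> real" where "strict_mono \<psi>" "\<And>x y. (x, y) \<in> P \<Longrightarrow> \<psi> x = y"
proof -
  obtain s where "s > 0" and slope:
    "\<And>x y x' y'. (x, y) \<in> P \<Longrightarrow> (x', y') \<in> P \<Longrightarrow> x \<le> x' \<Longrightarrow> s * (x' - x) \<le> y' - y"
    using order_preserving_pairs_slope[OF assms] by blast
  define offset where "offset = (\<lambda>(x, y). y - s * x)"
  define m where "m = Min (insert 0 (offset ` P))"
  define M where "M = (\<lambda>z. Max (insert m (offset ` {p \<in> P. fst p \<le> z})))"
  have fin: "finite (insert m (offset ` {p \<in> P. fst p \<le> z}))" for z
    using assms(1) by auto
  have "strict_mono (\<lambda>z. s * z + M z)"
  proof (rule strict_monoI)
    fix z z' :: real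
    assume "z < z'"
    moreover have "M z \<le> M z'"
      unfolding M_def using fin \<open>z < z'\<close> by (intro Max_mono) auto
    ultimately show "s * z + M z < s * z' + M z'"
      using \<open>s > 0\<close> by (simp add: add_less_le_mono)
  qed
  moreover have "s * x + M x = y" if "(x, y) \<in> P" for x y
  proof -
    have "M x = y - s * x"
      unfolding M_def
    proof (rule Max_eqI[OF fin])
      show "y - s * x \<in> insert m (offset ` {p \<in> P. fst p \<le> x})"
        using that unfolding offset_def by (auto intro!: image_eqI[of _ _ "(x, y)"])
    next
      fix z
      assume "z \<in> insert m (offset ` {p \<in> P. fst p \<le> x})"
      moreover have "m \<le> y - s * x"
        unfolding m_def offset_def using assms(1) that by (intro Min_le) (auto intro!: image_eqI[of _ _ "(x, y)"])
      moreover have "y'' - s * x'' \<le> y - s * x" if "(x'', y'') \<in> P" "x'' \<le> x" for x'' y''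
        using slope[OF that(1) \<open>(x, y) \<in> P\<close> that(2)] by (simp add: algebra_simps)
      ultimately show "z \<le> y - s * x"
        unfolding offset_def by auto
    qed
    then show ?thesis
      by simp
  qed
  ultimately show ?thesis
    using that by blast
qed

lemma strict_mono_frac_lift:
  fixes \<psi> :: "real \<Rightarrow> real"
  assumes "strict_mono \<psi>" "\<psi> 0 = 0" "\<psi> 1 = 1"
  shows "strict_mono (\<lambda>x. of_int \<lfloor>x\<rfloor> + \<psi> (frac x))"
proof (rule strict_monoI)
  have range: "0 \<le> \<psi> (frac x) \<and> \<psi> (frac x) < 1" for x
    using strict_mono_less_eq[OF assms(1), of 0 "frac x"] strict_mono_less[OF assms(1), of "frac x" 1]
    by (simp add: assms(2,3) frac_lt_1)
  fix a b :: real
  assume "a < b"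
  show "of_int \<lfloor>a\<rfloor> + \<psi> (frac a) < of_int \<lfloor>b\<rfloor> + \<psi> (frac b)"
  proof (cases "\<lfloor>a\<rfloor> = \<lfloor>b\<rfloor>")
    case True
    with \<open>a < b\<close> have "frac a < frac b"
      unfolding frac_def by simp
    with True show ?thesis
      using strict_monoD[OF assms(1)] by simp
  next
    case False
    with \<open>a < b\<close> have "\<lfloor>a\<rfloor> + 1 \<le> \<lfloor>b\<rfloor>"
      by (meson floor_mono less_eq_real_def order_le_neq_trans zless_imp_add1_zle)
    then have "of_int \<lfloor>a\<rfloor> + 1 \<le> (of_int \<lfloor>b\<rfloor> :: real)"
      by linarith
    then show ?thesis
      using range[of a] range[of b] by linarith
  qed
qed

context
  fixes \<phi> :: "real \<Rightarrow> real"
  assumes mono: "strict_mono \<phi>"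
    and shift: "\<And>a k. \<phi> (a + of_int k) = \<phi> a + of_int k"
begin

lemma equivariant_floor_diff: "\<lfloor>\<phi> x - \<phi> y\<rfloor> = \<lfloor>x - y\<rfloor>"
proof -
  define m where "m = \<lfloor>x - y\<rfloor>"
  have "y + of_int m \<le> x" "x < y + of_int (m + 1)"
    unfolding m_def by linarith+
  then have "\<phi> (y + of_int m) \<le> \<phi> x" "\<phi> x < \<phi> (y + of_int (m + 1))"
    using strict_mono_less_eq[OF mono] strict_mono_less[OF mono] by blast+
  then have "\<phi> y + of_int m \<le> \<phi> x" "\<phi> x < \<phi> y + of_int (m + 1)"
    unfolding shift by simp_all
  then show ?thesis
    unfolding m_def[symmetric] by (intro floor_unique) auto
qed

lemma equivariant_frac_diff_eq_0_iff: "frac (\<phi> x - \<phi> y) = 0 \<longleftrightarrow> frac (x - y) = 0"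
proof -
  define m where "m = \<lfloor>x - y\<rfloor>"
  have "frac (x - y) = 0 \<longleftrightarrow> x = y + of_int m"
    unfolding frac_def m_def by linarith
  moreover have "frac (\<phi> x - \<phi> y) = 0 \<longleftrightarrow> \<phi> x = \<phi> y + of_int m"
    unfolding frac_def m_def equivariant_floor_diff by linarith
  moreover have "x = y + of_int m \<longleftrightarrow> \<phi> x = \<phi> (y + of_int m)"
    using strict_mono_eq[OF mono] by metis
  ultimately show ?thesis
    unfolding shift by blast
qed

lemma equivariant_frac_diff_le_iff:
  "frac (\<phi> x - \<phi> y) \<le> frac (\<phi> z - \<phi> y) \<longleftrightarrow> frac (x - y) \<le> frac (z - y)"
proof -
  define m where "m = \<lfloor>x - y\<rfloor> - \<lfloor>z - y\<rfloor>"
  have "frac (x - y) \<le> frac (z - y) \<longleftrightarrow> x \<le> z + of_int m"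
    unfolding frac_def m_def by simp linarith
  moreover have "frac (\<phi> x - \<phi> y) \<le> frac (\<phi> z - \<phi> y) \<longleftrightarrow> \<phi> x \<le> \<phi> z + of_int m"
    unfolding frac_def m_def equivariant_floor_diff by simp linarith
  moreover have "x \<le> z + of_int m \<longleftrightarrow> \<phi> x \<le> \<phi> (z + of_int m)"
    using strict_mono_less_eq[OF mono] by metis
  ultimately show ?thesis
    unfolding shift by blast
qed

end

text \<open>The map is the lift, periodic modulo integer translations, of a strictly increasing
  interpolant of the pairs \<open>(frac (\<mu>1 c), frac (\<mu>2 c))\<close>, \<open>(0, 0)\<close> and \<open>(1, 1)\<close>.\<close>

lemma same_region_equivariant_map:
  fixes A :: "('s, 'c::finite, 'l) ta"
  assumes "same_region A \<mu>1 \<mu>2"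
  obtains \<phi> :: "real \<Rightarrow> real" where "strict_mono \<phi>" "\<And>a k. \<phi> (a + of_int k) = \<phi> a + of_int k"
    "\<phi> 0 = 0" "\<And>c. \<mu>1 c \<le> kappa A c \<Longrightarrow> \<phi> (\<mu>1 c) = \<mu>2 c"
proof -
  define C where "C = {c. \<mu>1 c \<le> kappa A c}"
  define P where "P = insert (0, 0) (insert (1, 1) ((\<lambda>c. (frac (\<mu>1 c), frac (\<mu>2 c))) ` C))"
  have frac_le_1: "frac x \<le> 1" "\<not> 1 \<le> frac x" for x :: real
    using frac_lt_1[of x] by simp_all
  have "finite P"
    unfolding P_def by simp
  moreover have "x \<le> x' \<longleftrightarrow> y \<le> y'" if "(x, y) \<in> P" "(x', y') \<in> P" for x y x' y'
  proof -
    have frac_eq_0: "frac (\<mu>1 c) = 0 \<longleftrightarrow> frac (\<mu>2 c) = 0" if "c \<in> C" for c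
      using assms that unfolding same_region_def C_def by blast
    have frac_le: "frac (\<mu>1 c) \<le> frac (\<mu>1 d) \<longleftrightarrow> frac (\<mu>2 c) \<le> frac (\<mu>2 d)" if "c \<in> C" "d \<in> C" for c d
      using assms that unfolding same_region_def C_def by blast
    have cases: "(x = 0 \<and> y = 0) \<or> (x = 1 \<and> y = 1) \<or> (\<exists>c \<in> C. x = frac (\<mu>1 c) \<and> y = frac (\<mu>2 c))"
      if "(x, y) \<in> P" for x y
      using that unfolding P_def by auto
    from cases[OF that(1)] cases[OF that(2)] show ?thesis
      by (elim disjE conjE bexE)
        (simp_all del: frac_eq_0_iff add: frac_le_0_iff frac_le_1 frac_eq_0 frac_le)
  qed
  ultimately obtain \<psi> where \<psi>: "strict_mono \<psi>" "\<And>x y. (x, y) \<in> P \<Longrightarrow> \<psi> x = y"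
    using strict_mono_interpolant by blast
  have "\<psi> 0 = 0" "\<psi> 1 = 1" "\<And>c. c \<in> C \<Longrightarrow> \<psi> (frac (\<mu>1 c)) = frac (\<mu>2 c)"
    by (rule \<psi>(2); simp add: P_def)+
  show ?thesis
  proof
    show "strict_mono (\<lambda>x. of_int \<lfloor>x\<rfloor> + \<psi> (frac x))"
      using strict_mono_frac_lift[OF \<psi>(1)] \<open>\<psi> 0 = 0\<close> \<open>\<psi> 1 = 1\<close> .
    show "of_int \<lfloor>a + of_int k\<rfloor> + \<psi> (frac (a + of_int k)) = of_int \<lfloor>a\<rfloor> + \<psi> (frac a) + of_int k"
      for a k
      by simp
    show "of_int \<lfloor>0::real\<rfloor> + \<psi> (frac 0) = 0"
      using \<open>\<psi> 0 = 0\<close> by simp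
    show "of_int \<lfloor>\<mu>1 c\<rfloor> + \<psi> (frac (\<mu>1 c)) = \<mu>2 c" if "\<mu>1 c \<le> kappa A c" for c
      using that assms \<open>\<And>c. c \<in> C \<Longrightarrow> \<psi> (frac (\<mu>1 c)) = frac (\<mu>2 c)\<close>
      unfolding same_region_def C_def frac_def by simp
  qed
qed

text \<open>The witness is \<open>t' = - \<phi> (- t)\<close>: the map \<open>\<phi>\<close> sends \<open>\<mu>1 c - (- t)\<close> to \<open>\<mu>2 c - \<phi> (- t)\<close>
  and preserves the integer parts and the order of fractional parts of such differences.\<close>

lemma same_region_delay:
  fixes A :: "('s, 'c::finite, 'l) ta"
  assumes "same_region A \<mu>1 \<mu>2" "t \<ge> 0"
  obtains t' where "t' \<ge> 0" "same_region A (\<lambda>c. \<mu>1 c + t) (\<lambda>c. \<mu>2 c + t')"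
proof -
  obtain \<phi> where \<phi>: "strict_mono \<phi>" "\<And>a k. \<phi> (a + of_int k) = \<phi> a + of_int k"
    "\<phi> 0 = 0" "\<And>c. \<mu>1 c \<le> kappa A c \<Longrightarrow> \<phi> (\<mu>1 c) = \<mu>2 c"
    using same_region_equivariant_map[OF assms(1)] by blast
  define t' where "t' = - \<phi> (- t)"
  have "t' \<ge> 0"
    unfolding t'_def using strict_mono_less_eq[OF \<phi>(1), of "- t" 0] \<phi>(3) assms(2) by simp
  have diff: "\<mu>2 c + t' = \<phi> (\<mu>1 c) - \<phi> (- t)" if "\<mu>1 c \<le> kappa A c" for c
    unfolding t'_def using \<phi>(4)[OF that] by simp
  have floor_eq: "\<lfloor>\<mu>1 c + t\<rfloor> = \<lfloor>\<mu>2 c + t'\<rfloor>"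
    and frac_eq_0: "frac (\<mu>1 c + t) = 0 \<longleftrightarrow> frac (\<mu>2 c + t') = 0"
    if "\<mu>1 c \<le> kappa A c" for c
    using equivariant_floor_diff[OF \<phi>(1,2), of "\<mu>1 c" "- t"]
      equivariant_frac_diff_eq_0_iff[OF \<phi>(1,2), of "\<mu>1 c" "- t"] diff[OF that]
    by simp_all
  have frac_le: "frac (\<mu>1 c + t) \<le> frac (\<mu>1 d + t) \<longleftrightarrow> frac (\<mu>2 c + t') \<le> frac (\<mu>2 d + t')"
    if "\<mu>1 c \<le> kappa A c" "\<mu>1 d \<le> kappa A d" for c d
    using equivariant_frac_diff_le_iff[OF \<phi>(1,2), of "\<mu>1 c" "- t" "\<mu>1 d"] diff[OF that(1)] diff[OF that(2)]
    by simp
  have bounded: "\<mu>1 c + t \<le> kappa A c \<longleftrightarrow> \<mu>2 c + t' \<le> kappa A c" for c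
  proof (cases "\<mu>1 c \<le> kappa A c")
    case True
    obtain n :: nat where "kappa A c = real n"
      using kappa_eq_nat[of A c] by blast
    with cmp_sat_floor_frac_cong[OF floor_eq[OF True] frac_eq_0[OF True], of Le n] show ?thesis
      by simp
  next
    case False
    then have "\<mu>2 c > kappa A c"
      using assms(1) unfolding same_region_def by auto
    with False show ?thesis
      using assms(2) \<open>t' \<ge> 0\<close> by auto
  qed
  have "\<mu>1 c \<le> kappa A c" if "\<mu>1 c + t \<le> kappa A c" for c
    using that assms(2) by linarith
  with bounded floor_eq frac_eq_0 frac_le have "same_region A (\<lambda>c. \<mu>1 c + t) (\<lambda>c. \<mu>2 c + t')"
    unfolding same_region_def by blast
  with \<open>t' \<ge> 0\<close> that show ?thesis
    by blast
qed

section \<open>Continuations of reached configurations\<close>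

lemma region_word_of_vw_Cons:
  "region_word_of A (vw ((\<sigma>, v, b) # \<gamma>)) = (\<sigma>, region_of A v) # region_word_of A (vw \<gamma>)"
  unfolding region_word_of_def vw_def by simp

lemma region_word_of_vw_eq_Nil_iff: "region_word_of A (vw \<gamma>) = [] \<longleftrightarrow> \<gamma> = []"
  unfolding region_word_of_def vw_def by simp

lemma runp_region_simulation:
  fixes A :: "('s, 'c::finite, 'l) ta"
  assumes "runp A l \<mu>1 w ts \<alpha> l'" "finite (trans A)" "same_region A \<mu>1 \<mu>2"
  shows "\<exists>w2 \<beta>. runp A l \<mu>2 w2 ts \<beta> l' \<and> region_word_of A (vw \<alpha>) = region_word_of A (vw \<beta>)"
  using assms(1,3)
proof (induction arbitrary: \<mu>2 rule: runp.induct)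
  case (run_nil l \<nu>)
  show ?case
    using runp.run_nil[of A l \<mu>2] by blast
next
  case (run_step l \<sigma> \<phi> B l'' t v \<nu> w ts \<gamma> l')
  obtain t' where "t' \<ge> 0" and delayed: "same_region A (\<lambda>c. \<nu> c + t) (\<lambda>c. \<mu>2 c + t')"
    using same_region_delay[OF run_step.prems run_step.hyps(2)] by blast
  define v' where "v' = (\<lambda>c. \<mu>2 c + t')"
  have "same_region A v v'"
    using delayed unfolding v'_def run_step.hyps(3) .
  then have "sat v' \<phi>"
    using sat_same_region[OF assms(2) run_step.hyps(1)] run_step.hyps(4) by blast
  obtain w2 \<beta> where "runp A l'' (\<lambda>c. if c \<in> B then 0 else v' c) w2 ts \<beta> l'"
    and "region_word_of A (vw \<gamma>) = region_word_of A (vw \<beta>)"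
    using run_step.IH same_region_reset[OF \<open>same_region A v v'\<close>] by blast
  moreover have "region_of A v = region_of A v'"
    using \<open>same_region A v v'\<close> region_of_eq_iff by blast
  ultimately show ?case
    using runp.run_step[OF run_step.hyps(1) \<open>t' \<ge> 0\<close> v'_def \<open>sat v' \<phi>\<close>]
    by (intro exI[of _ "(\<sigma>, t') # w2"] exI[of _ "(\<sigma>, v', \<lambda>c. c \<in> B) # \<beta>"])
      (simp add: region_word_of_vw_Cons)
qed

text \<open>Induction along the continuations: the first transition of one is enabled at the first
  valuation of the other, since guards are unions of regions, so by determinism both continuations
  take the same transition.\<close>

lemma dta_region_word_determines_continuation:
  fixes A :: "('s::finite, 'c::finite, 'l) ta"
  assumes dta: "is_DTA A" and "reaches A \<gamma>1 l" "reaches A \<gamma>2 l"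
    and "runp A l (final_val (\<lambda>_. 0) \<gamma>1) w1 ts1 \<alpha>1 l1"
    and "runp A l (final_val (\<lambda>_. 0) \<gamma>2) w2 ts2 \<alpha>2 l2"
    and "region_word_of A (vw \<alpha>1) = region_word_of A (vw \<alpha>2)"
  shows "resets \<alpha>1 = resets \<alpha>2 \<and> l1 = l2"
  using assms(2-)
proof (induction \<alpha>1 arbitrary: \<gamma>1 \<gamma>2 l w1 ts1 \<alpha>2 w2 ts2)
  case Nil
  then have "\<alpha>2 = []"
    using region_word_of_vw_eq_Nil_iff by metis
  with Nil show ?case
    by (auto simp: resets_def elim: runp_NilE)
next
  case (Cons x1 \<alpha>1)
  have finite_trans: "finite (trans A)"
    using dta unfolding is_DTA_def wf_ta_def by blast
  obtain x2 \<alpha>2' where \<alpha>2: "\<alpha>2 = x2 # \<alpha>2'"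
    using Cons.prems(5) by (cases \<alpha>2) (auto simp: region_word_of_def vw_def)
  from Cons.prems(3) show ?case
  proof (cases rule: runp_ConsE)
    case (step \<sigma> \<phi>1 B1 l1' t1 w1' ts1')
    note step1 = step
    from Cons.prems(4)[unfolded \<alpha>2] show ?thesis
    proof (cases rule: runp_ConsE)
      case (step \<sigma>2 \<phi>2 B2 l2' t2 w2' ts2')
      note step2 = step
      let ?v1 = "\<lambda>c. final_val (\<lambda>_. 0) \<gamma>1 c + t1" and ?v2 = "\<lambda>c. final_val (\<lambda>_. 0) \<gamma>2 c + t2"
      have "\<sigma>2 = \<sigma>" "region_of A ?v1 = region_of A ?v2"
        using Cons.prems(5) step1 step2 unfolding \<alpha>2
        by (simp_all add: region_word_of_vw_Cons)
      then have "sat ?v2 \<phi>1"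
        using sat_same_region[OF finite_trans step1(4)] step1(6) region_of_eq_iff by blast
      moreover have "(l, \<sigma>, \<phi>2, B2, l2') \<in> trans A"
        using step2(4) \<open>\<sigma>2 = \<sigma>\<close> by simp
      ultimately have "B1 = B2" "l1' = l2'"
        using dta_enabled_transition_unique[OF dta Cons.prems(2) step2(5) step1(4)] step2(6)
        by blast+
      have "runp A l (final_val (\<lambda>_. 0) \<gamma>1) [(\<sigma>, t1)] [(l, \<sigma>, \<phi>1, B1, l1')] [x1] l1'"
        "runp A l (final_val (\<lambda>_. 0) \<gamma>2) [(\<sigma>, t2)] [(l, \<sigma>, \<phi>2, B2, l2')] [x2] l2'"
        using runp_single step1 step2 \<open>\<sigma>2 = \<sigma>\<close> by simp_all
      then have "reaches A (\<gamma>1 @ [x1]) l1'" "reaches A (\<gamma>2 @ [x2]) l1'"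
        using Cons.prems(1,2) \<open>l1' = l2'\<close> unfolding reaches_append_iff by blast+
      moreover have "final_val (\<lambda>_. 0) (\<gamma>1 @ [x1]) = (\<lambda>c. if c \<in> B1 then 0 else ?v1 c)"
        "final_val (\<lambda>_. 0) (\<gamma>2 @ [x2]) = (\<lambda>c. if c \<in> B2 then 0 else ?v2 c)"
        using step1 step2 by (simp_all add: final_val_append)
      moreover have "region_word_of A (vw \<alpha>1) = region_word_of A (vw \<alpha>2')"
        using Cons.prems(5) step1 step2 unfolding \<alpha>2 by (simp add: region_word_of_vw_Cons)
      ultimately have "resets \<alpha>1 = resets \<alpha>2' \<and> l1 = l2"
        using Cons.IH step1 step2 \<open>l1' = l2'\<close> by simp
      with step1 step2 \<open>B1 = B2\<close> show ?thesis
        unfolding \<alpha>2 resets_def by simp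
    qed
  qed
qed

definition reached_config :: "('s, 'c, 'l) ta \<Rightarrow> ('s, 'c) rcword \<Rightarrow> ('l \<times> ('c \<Rightarrow> real) set) set" where
  "reached_config A \<gamma> = {(l, region_of A (final_val (\<lambda>_. 0) \<gamma>)) | l. reaches A \<gamma> l}"

lemma reached_config_eqD:
  assumes "reached_config A \<gamma>1 = reached_config A \<gamma>2" "reaches A \<gamma>1 l"
  shows "reaches A \<gamma>2 l" "same_region A (final_val (\<lambda>_. 0) \<gamma>1) (final_val (\<lambda>_. 0) \<gamma>2)"
proof -
  have "(l, region_of A (final_val (\<lambda>_. 0) \<gamma>1)) \<in> reached_config A \<gamma>2"
    using assms unfolding reached_config_def by blast
  then show "reaches A \<gamma>2 l" "same_region A (final_val (\<lambda>_. 0) \<gamma>1) (final_val (\<lambda>_. 0) \<gamma>2)"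
    unfolding reached_config_def by (auto simp: region_of_eq_iff)
qed

lemma same_config_vs_nonempty:
  fixes A :: "('s::finite, 'c::finite, 'l) ta"
  assumes dta: "is_DTA A" and config: "reached_config A \<gamma>1 = reached_config A \<gamma>2"
    and "\<alpha>1 \<in> vs A \<gamma>1 \<xi>"
  obtains \<alpha>2 where "\<alpha>2 \<in> vs A \<gamma>2 \<xi>"
proof -
  have "valid_rc A \<gamma>1"
    using assms(3) vs_empty_if_not_valid by blast
  then obtain l where "reaches A \<gamma>1 l"
    unfolding valid_rc_iff_reaches by blast
  note reach2 = reached_config_eqD[OF config this]
  obtain w ts l' where run: "runp A l (final_val (\<lambda>_. 0) \<gamma>1) w ts \<alpha>1 l'"
    and "region_word_of A (vw \<alpha>1) = \<xi>"
    using assms(3) vs_eq_continuations[OF dta \<open>reaches A \<gamma>1 l\<close>] by blast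
  moreover have "finite (trans A)"
    using dta unfolding is_DTA_def wf_ta_def by blast
  ultimately obtain w2 \<alpha>2 where "runp A l (final_val (\<lambda>_. 0) \<gamma>2) w2 ts \<alpha>2 l'"
    "region_word_of A (vw \<alpha>2) = \<xi>"
    using runp_region_simulation[OF run _ reach2(2)] by auto
  then show ?thesis
    using that vs_eq_continuations[OF dta reach2(1)] by blast
qed

lemma same_config_continuations_agree:
  fixes A :: "('s::finite, 'c::finite, 'l) ta"
  assumes dta: "is_DTA A" and config: "reached_config A \<gamma>1 = reached_config A \<gamma>2"
    and "\<alpha>1 \<in> vs A \<gamma>1 \<xi>" "\<alpha>2 \<in> vs A \<gamma>2 \<xi>"
  shows "(\<gamma>1 @ \<alpha>1 \<in> Lr A \<longleftrightarrow> \<gamma>2 @ \<alpha>2 \<in> Lr A) \<and> resets \<alpha>1 = resets \<alpha>2"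
proof -
  have "valid_rc A \<gamma>1"
    using assms(3) vs_empty_if_not_valid by blast
  then obtain l where reach1: "reaches A \<gamma>1 l"
    unfolding valid_rc_iff_reaches by blast
  note reach2 = reached_config_eqD(1)[OF config reach1]
  obtain w1 ts1 l1 where run1: "runp A l (final_val (\<lambda>_. 0) \<gamma>1) w1 ts1 \<alpha>1 l1"
    and "region_word_of A (vw \<alpha>1) = \<xi>"
    using assms(3) vs_eq_continuations[OF dta reach1] by blast
  moreover obtain w2 ts2 l2 where run2: "runp A l (final_val (\<lambda>_. 0) \<gamma>2) w2 ts2 \<alpha>2 l2"
    and "region_word_of A (vw \<alpha>2) = \<xi>"
    using assms(4) vs_eq_continuations[OF dta reach2] by blast
  ultimately have "resets \<alpha>1 = resets \<alpha>2" "l1 = l2"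
    using dta_region_word_determines_continuation[OF dta reach1 reach2 run1 run2] by simp_all
  then show ?thesis
    using append_in_Lr_iff[OF dta reach1 run1] append_in_Lr_iff[OF dta reach2 run2] by simp
qed

lemma rc_equiv_cong_config:
  fixes A :: "('s::finite, 'c::finite, 'l) ta"
  assumes dta: "is_DTA A" and "reached_config A \<gamma>1 = reached_config A \<gamma>2"
  shows "rc_equiv A \<gamma>1 \<gamma> \<longleftrightarrow> rc_equiv A \<gamma>2 \<gamma>"
proof -
  have "rc_equiv A \<gamma>2 \<gamma>"
    if equiv: "rc_equiv A \<gamma>1 \<gamma>" and config: "reached_config A \<gamma>1 = reached_config A \<gamma>2" for \<gamma>1 \<gamma>2
    unfolding rc_equiv_def
  proof (intro allI ballI)
    fix \<xi> \<alpha>2 \<beta>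
    assume "\<alpha>2 \<in> vs A \<gamma>2 \<xi>" "\<beta> \<in> vs A \<gamma> \<xi>"
    moreover obtain \<alpha>1 where "\<alpha>1 \<in> vs A \<gamma>1 \<xi>"
      using same_config_vs_nonempty[OF dta config[symmetric] \<open>\<alpha>2 \<in> vs A \<gamma>2 \<xi>\<close>] .
    ultimately have "(\<gamma>1 @ \<alpha>1 \<in> Lr A \<longleftrightarrow> \<gamma> @ \<beta> \<in> Lr A) \<and> resets \<alpha>1 = resets \<beta>"
      and "(\<gamma>1 @ \<alpha>1 \<in> Lr A \<longleftrightarrow> \<gamma>2 @ \<alpha>2 \<in> Lr A) \<and> resets \<alpha>1 = resets \<alpha>2"
      using equiv same_config_continuations_agree[OF dta config] unfolding rc_equiv_def by blast+
    then show "(\<gamma>2 @ \<alpha>2 \<in> Lr A \<longleftrightarrow> \<gamma> @ \<beta> \<in> Lr A) \<and> resets \<alpha>2 = resets \<beta>"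
      by simp
  qed
  then show ?thesis
    using assms(2) by blast
qed

lemma runp_locs:
  fixes A :: "('s::finite, 'c::finite, 'l) ta"
  assumes "runp A l \<nu> w ts \<gamma> l'" "wf_ta A" "l \<in> locs A"
  shows "l' \<in> locs A"
  using assms
proof (induction rule: runp.induct)
  case (run_step l \<sigma> \<phi> B l'' t v \<nu> w ts \<gamma> l')
  then show ?case
    unfolding wf_ta_def by blast
qed simp

lemma final_val_nonneg:
  assumes "runp A l \<nu> w ts \<gamma> l'" "\<forall>c. 0 \<le> \<nu> c"
  shows "\<forall>c. 0 \<le> final_val \<nu> \<gamma> c"
  using assms
proof (induction rule: runp.induct)
  case (run_step l \<sigma> \<phi> B l'' t v \<nu> w ts \<gamma> l')
  then have "\<forall>c. 0 \<le> (if c \<in> B then 0 else v c)"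
    by simp
  with run_step.IH show ?case
    by simp
qed simp

lemma finite_reached_configs:
  fixes A :: "('s::finite, 'c::finite, 'l) ta"
  assumes "wf_ta A"
  shows "finite (range (reached_config A))"
proof -
  let ?C = "locs A \<times> region_of A ` {\<nu>. \<forall>c. 0 \<le> \<nu> c}"
  have "reached_config A \<gamma> \<subseteq> ?C" for \<gamma>
  proof
    fix p
    assume "p \<in> reached_config A \<gamma>"
    then obtain l w ts where p: "p = (l, region_of A (final_val (\<lambda>_. 0) \<gamma>))"
      and run: "runp A (init A) (\<lambda>_. 0) w ts \<gamma> l"
      unfolding reached_config_def reaches_def by blast
    have "l \<in> locs A"
      using runp_locs[OF run assms] assms unfolding wf_ta_def by blast
    moreover have "\<forall>c. 0 \<le> final_val (\<lambda>_. 0) \<gamma> c"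
      using final_val_nonneg[OF run] by simp
    ultimately show "p \<in> ?C"
      unfolding p by blast
  qed
  then have "range (reached_config A) \<subseteq> Pow ?C"
    by blast
  moreover have "finite (locs A)"
    using assms unfolding wf_ta_def by blast
  then have "finite ?C"
    using finite_nonneg_regions by blast
  ultimately show ?thesis
    by (simp add: finite_subset)
qed

theorem theorem3p10:
  fixes A :: "('s::finite, 'c::finite, 'l) ta"
  assumes "is_DTA A"
  shows "finite (UNIV // {(\<gamma>1, \<gamma>2). rc_equiv A \<gamma>1 \<gamma>2})"
proof -
  let ?r = "{(\<gamma>1, \<gamma>2). rc_equiv A \<gamma>1 \<gamma>2}"
  have "finite (range (reached_config A))"
    using assms finite_reached_configs unfolding is_DTA_def by blast
  then have "finite (range (\<lambda>\<gamma>. ?r `` {\<gamma>}))"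
  proof (rule finite_image_factor)
    fix \<gamma>1 \<gamma>2
    assume "reached_config A \<gamma>1 = reached_config A \<gamma>2"
    with rc_equiv_cong_config[OF assms] show "?r `` {\<gamma>1} = ?r `` {\<gamma>2}"
      by blast
  qed
  moreover have "UNIV // ?r = range (\<lambda>\<gamma>. ?r `` {\<gamma>})"
    unfolding quotient_def by blast
  ultimately show ?thesis
    by simp
qed

end
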